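(* Let $G \ge 2$ and $p_t \in (0,1)$. Let $r_{t,1},\dots,r_{t,G}$ be i.i.d. $\mathrm{Bernoulli}(p_t)$, $R=\sum_{j} r_{t,j}$, $\hat p_t=R/G$, $\hat A_{t,i}=r_{t,i}-\hat p_t$, $A_{t,i}=r_{t,i}-p_t$, and $\mathcal S=\{1\le R\le G-1\}$. Then for every $i\in[G]$, \[ \mathbb E\!\left[A_{t,i}-\hat A_{t,i}\mid \mathcal S\right]=\frac{p_t(1-p_t)^G+p_t^{G+1}-p_t^G}{1-(1-p_t)^G-p_t^G}. \]
   Context: $\hat A_{t,i}$ is the group-relative advantage with group baseline $\hat p_t$; $A_{t,i}$ is the expected advantage; $\mathcal S$ is the event that not all rewards in the group are equal. *)

theory Defs
  imports "HOL-Probability.Probability"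
begin

definition num_succ :: "nat \<Rightarrow> (nat \<Rightarrow> bool) \<Rightarrow> real" where
  "num_succ G \<omega> = (\<Sum>j<G. of_bool (\<omega> j))"

end

(* The difference A - \hat A = R/G - p does not involve coordinate i. It has mean zero, and off
   the event S it equals -p (all rewards 0, probability (1 - p)^G) or 1 - p (all rewards 1,
   probability p^G). Hence E[(R/G - p) 1_S] = p (1 - p)^G - (1 - p) p^G, and conditioning on S
   divides by P(S) = 1 - (1 - p)^G - p^G. *)
theory Submission
  imports Defs
begin

lemma integral_cond_pmf:
  fixes f :: "'a \<Rightarrow> real"
  assumes "set_pmf p \<inter> S \<noteq> {}"
  shows "measure_pmf.expectation (cond_pmf p S) f
         = measure_pmf.expectation p (\<lambda>x. f x * indicator S x) / measure_pmf.prob p S"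
proof -
  have pos: "measure_pmf.prob p S > 0"
    using assms by (auto intro: measure_pmf_posI)
  have "measure_pmf (cond_pmf p S)
        = density p (\<lambda>x. ennreal (indicator S x / measure_pmf.prob p S))"
    unfolding cond_pmf.rep_eq[OF assms] uniform_measure_def
    using pos by (intro density_cong)
      (auto simp: measure_pmf.emeasure_eq_measure indicator_def divide_ennreal[of 1, simplified])
  also have "integral\<^sup>L \<dots> f
             = measure_pmf.expectation p (\<lambda>x. indicator S x / measure_pmf.prob p S * f x)"
    using pos by (subst integral_density) auto
  finally show ?thesis
    by (simp add: mult.commute)
qed

lemma integrable_Pi_pmf_finite:
  fixes f :: "('a \<Rightarrow> 'b::finite) \<Rightarrow> real"
  assumes "finite A"
  shows "integrable (measure_pmf (Pi_pmf A d p)) f"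
  using assms by (intro integrable_measure_pmf_finite) (auto simp: set_Pi_pmf)

lemma expectation_Pi_pmf_bernoulli_component:
  assumes "finite I" and "j \<in> I" and "0 \<le> p" and "p \<le> 1"
  shows "measure_pmf.expectation (Pi_pmf I d (\<lambda>_. bernoulli_pmf p)) (\<lambda>\<omega>. of_bool (\<omega> j) :: real) = p"
proof -
  have "measure_pmf.expectation (Pi_pmf I d (\<lambda>_. bernoulli_pmf p)) (\<lambda>\<omega>. of_bool (\<omega> j) :: real)
        = measure_pmf.expectation (map_pmf (\<lambda>\<omega>. \<omega> j) (Pi_pmf I d (\<lambda>_. bernoulli_pmf p))) (\<lambda>b. of_bool b)"
    by (rule integral_map_pmf [symmetric])
  also have "map_pmf (\<lambda>\<omega>. \<omega> j) (Pi_pmf I d (\<lambda>_. bernoulli_pmf p)) = bernoulli_pmf p"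
    using assms by (simp add: Pi_pmf_component)
  finally show ?thesis
    using assms by simp
qed

lemma prob_Pi_pmf_bernoulli_all_True:
  assumes "finite I" and "0 \<le> p" and "p \<le> 1"
  shows "measure_pmf.prob (Pi_pmf I d (\<lambda>_. bernoulli_pmf p)) {\<omega>. \<forall>j\<in>I. \<omega> j} = p ^ card I"
proof -
  have "{\<omega>. \<forall>j\<in>I. \<omega> j} = Pi I (\<lambda>_. {True})" by (auto simp: Pi_def)
  then show ?thesis
    using assms by (simp add: measure_Pi_pmf_Pi measure_pmf_single)
qed

lemma prob_Pi_pmf_bernoulli_all_False:
  assumes "finite I" and "0 \<le> p" and "p \<le> 1"
  shows "measure_pmf.prob (Pi_pmf I d (\<lambda>_. bernoulli_pmf p)) {\<omega>. \<forall>j\<in>I. \<not> \<omega> j}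
         = (1 - p) ^ card I"
proof -
  have "{\<omega>. \<forall>j\<in>I. \<not> \<omega> j} = Pi I (\<lambda>_. {False})" by (auto simp: Pi_def)
  then show ?thesis
    using assms by (simp add: measure_Pi_pmf_Pi measure_pmf_single)
qed

lemma expectation_num_succ:
  assumes "0 \<le> p" and "p \<le> 1"
  shows "measure_pmf.expectation (Pi_pmf {..<G} d (\<lambda>_. bernoulli_pmf p)) (num_succ G) = real G * p"
  unfolding num_succ_def using assms
  by (subst Bochner_Integration.integral_sum)
     (simp_all add: integrable_Pi_pmf_finite expectation_Pi_pmf_bernoulli_component)

definition mixed_outcomes :: "nat \<Rightarrow> (nat \<Rightarrow> bool) set" where
  "mixed_outcomes G = {\<omega>. (\<exists>j<G. \<omega> j) \<and> (\<exists>j<G. \<not> \<omega> j)}"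

lemma num_succ_between_iff_mixed:
  "(1 \<le> num_succ G \<omega> \<and> num_succ G \<omega> \<le> real G - 1) \<longleftrightarrow> \<omega> \<in> mixed_outcomes G"
proof -
  define k where "k = card {j\<in>{..<G}. \<omega> j}"
  have R: "num_succ G \<omega> = real k"
    unfolding num_succ_def k_def by (simp add: of_bool_def sum.If_cases Int_def)
  have "k \<le> G"
    unfolding k_def using card_mono[of "{..<G}" "{j\<in>{..<G}. \<omega> j}"] by auto
  have "k = 0 \<longleftrightarrow> (\<forall>j<G. \<not> \<omega> j)"
    unfolding k_def by (subst card_eq_0_iff) auto
  moreover have "k = G \<longleftrightarrow> (\<forall>j<G. \<omega> j)"
  proof
    assume "k = G"
    then have "{j\<in>{..<G}. \<omega> j} = {..<G}"
      unfolding k_def by (intro card_subset_eq) auto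
    then show "\<forall>j<G. \<omega> j" by auto
  next
    assume "\<forall>j<G. \<omega> j"
    then have "{j\<in>{..<G}. \<omega> j} = {..<G}" by auto
    then show "k = G" unfolding k_def by simp
  qed
  ultimately show ?thesis
    using \<open>k \<le> G\<close> unfolding R mixed_outcomes_def by auto
qed

lemma indicator_mixed_outcomes:
  assumes "0 < G"
  shows "indicator (mixed_outcomes G) \<omega>
         = 1 - indicator {\<omega>. \<forall>j<G. \<not> \<omega> j} \<omega> - (indicator {\<omega>. \<forall>j<G. \<omega> j} \<omega> :: real)"
  using assms by (auto simp: mixed_outcomes_def indicator_def)

lemma prob_mixed_outcomes:
  assumes "0 < G" and "0 \<le> p" and "p \<le> 1"
  shows "measure_pmf.prob (Pi_pmf {..<G} d (\<lambda>_. bernoulli_pmf p)) (mixed_outcomes G)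
         = 1 - (1 - p) ^ G - p ^ G"
proof -
  let ?M = "Pi_pmf {..<G} d (\<lambda>_. bernoulli_pmf p)"
  have ind: "indicator (mixed_outcomes G)
        = (\<lambda>\<omega>. 1 - indicator {\<omega>. \<forall>j<G. \<not> \<omega> j} \<omega> - indicator {\<omega>. \<forall>j<G. \<omega> j} \<omega> :: real)"
    using indicator_mixed_outcomes[OF assms(1)] by (intro ext)
  have "measure_pmf.prob ?M (mixed_outcomes G) = measure_pmf.expectation ?M (indicator (mixed_outcomes G))"
    by simp
  also have "\<dots> = 1 - measure_pmf.prob ?M {\<omega>. \<forall>j<G. \<not> \<omega> j} - measure_pmf.prob ?M {\<omega>. \<forall>j<G. \<omega> j}"
    unfolding ind by (simp add: integrable_Pi_pmf_finite)
  finally show ?thesis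
    using prob_Pi_pmf_bernoulli_all_True[of "{..<G}" p d] prob_Pi_pmf_bernoulli_all_False[of "{..<G}" p d]
      assms by (simp add: Ball_def)
qed

lemma expectation_centered_num_succ_mixed:
  assumes "0 < G" and "0 \<le> p" and "p \<le> 1"
  shows "measure_pmf.expectation (Pi_pmf {..<G} d (\<lambda>_. bernoulli_pmf p))
           (\<lambda>\<omega>. (num_succ G \<omega> / real G - p) * indicator (mixed_outcomes G) \<omega>)
         = p * (1 - p) ^ G - (1 - p) * p ^ G"
proof -
  let ?M = "Pi_pmf {..<G} d (\<lambda>_. bernoulli_pmf p)"
  define AF where "AF = {\<omega>. \<forall>j<G. \<not> \<omega> j}"
  define AT where "AT = {\<omega>. \<forall>j<G. \<omega> j}"
  have split: "(num_succ G \<omega> / real G - p) * indicator (mixed_outcomes G) \<omega>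
               = (num_succ G \<omega> / real G - p) + p * indicator AF \<omega> - (1 - p) * indicator AT \<omega>"
    for \<omega>
  proof -
    have "\<omega> \<in> AF \<Longrightarrow> num_succ G \<omega> = 0" "\<omega> \<in> AT \<Longrightarrow> num_succ G \<omega> = real G"
      unfolding AF_def AT_def num_succ_def by simp_all
    moreover have "\<omega> \<in> AF \<Longrightarrow> \<omega> \<notin> AT"
      using assms(1) unfolding AF_def AT_def by auto
    ultimately show ?thesis
      using assms(1) unfolding indicator_mixed_outcomes[OF assms(1)] AF_def [symmetric] AT_def [symmetric]
      by (auto simp: indicator_def)
  qed
  have "measure_pmf.expectation ?M
          (\<lambda>\<omega>. (num_succ G \<omega> / real G - p) * indicator (mixed_outcomes G) \<omega>)
        = measure_pmf.expectation ?M (num_succ G) / real G - p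
          + p * measure_pmf.prob ?M AF - (1 - p) * measure_pmf.prob ?M AT"
    unfolding split by (simp add: integrable_Pi_pmf_finite)
  also have "\<dots> = p * (1 - p) ^ G - (1 - p) * p ^ G"
    using assms prob_Pi_pmf_bernoulli_all_True[of "{..<G}" p d] prob_Pi_pmf_bernoulli_all_False[of "{..<G}" p d]
    unfolding AF_def AT_def by (simp add: expectation_num_succ Ball_def)
  finally show ?thesis .
qed

theorem lemma2:
  fixes G :: nat and p :: real and i :: nat
  assumes "G \<ge> 2" and "0 < p" and "p < 1" and "i < G"
  defines "M \<equiv> Pi_pmf {..<G} False (\<lambda>_. bernoulli_pmf p)"
      and "S \<equiv> {\<omega>. 1 \<le> num_succ G \<omega> \<and> num_succ G \<omega> \<le> real G - 1}"
  shows "measure_pmf.expectation (cond_pmf M S)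
           (\<lambda>\<omega>. (of_bool (\<omega> i) - p) - (of_bool (\<omega> i) - num_succ G \<omega> / real G))
         = (p * (1 - p) ^ G + p ^ (G + 1) - p ^ G) / (1 - (1 - p) ^ G - p ^ G)"
proof -
  have "0 < G" using assms(1) by simp
  have S: "S = mixed_outcomes G"
    unfolding S_def using num_succ_between_iff_mixed by blast
  have PS: "measure_pmf.prob M S = 1 - (1 - p) ^ G - p ^ G"
    unfolding S M_def using prob_mixed_outcomes \<open>0 < G\<close> assms(2,3) by simp
  have "(1 - p) ^ G < 1 - p" and "p ^ G < p"
    using power_strict_decreasing[of 1 G "1 - p"] power_strict_decreasing[of 1 G p] assms by simp_all
  then have "measure_pmf.prob M S > 0"
    unfolding PS by simp
  then have "set_pmf M \<inter> S \<noteq> {}"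
    using measure_pmf_zero_iff[of M S] by auto
  have "measure_pmf.expectation (cond_pmf M S)
          (\<lambda>\<omega>. (of_bool (\<omega> i) - p) - (of_bool (\<omega> i) - num_succ G \<omega> / real G))
        = measure_pmf.expectation (cond_pmf M S) (\<lambda>\<omega>. num_succ G \<omega> / real G - p)"
    by simp
  also have "\<dots> = measure_pmf.expectation M (\<lambda>\<omega>. (num_succ G \<omega> / real G - p) * indicator S \<omega>)
                  / measure_pmf.prob M S"
    using \<open>set_pmf M \<inter> S \<noteq> {}\<close> by (rule integral_cond_pmf)
  also have "\<dots> = (p * (1 - p) ^ G - (1 - p) * p ^ G) / (1 - (1 - p) ^ G - p ^ G)"
    unfolding PS unfolding S M_def
    using expectation_centered_num_succ_mixed \<open>0 < G\<close> assms(2,3) by simp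
  finally show ?thesis
    by (simp add: algebra_simps)
qed

end
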